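(* Let $N\geq2$, let $\eta$ be an $N$-core, let $t$ be a divisor of $N$, let $a\in\{0,\dots,t-1\}$ index a $t$-quotient and let $k\geq1$. Then there exists ${\bf G}\in\Lambda^*_N$ such that ${\bf G}(\lambda)={\bf p}_k(\lambda^{a/t})$ for every partition $\lambda$ with $\lambda^{\mathrm{mod}\,N}=\eta$.
   Context: $\zeta_N=e^{2\pi i/N}$. ${\bf p}_k(\lambda)=(1-2^{-k})\zeta(-k)+\sum_{i\ge1}[(\lambda_i-i+\frac12)^k-(-i+\frac12)^k]$. For $r\in\{0,\dots,N-1\}$: ${\bf p}_k^r(\lambda)=c_k^r+\sum_{i\geq1}\big[\zeta_N^{r(\lambda_i-i+1)}(\lambda_i-i+\frac12)^k-\zeta_N^{r(1-i)}(-i+\frac12)^k\big]$, where $c^0_k=(1-2^{-k})\zeta(-k)$ and for $r\ne0$, $\frac{1}{e^{z/2}-\zeta_N^{-r}e^{-z/2}}=\sum_kc_k^r\frac{z^k}{k!}$. $\Lambda_N^*=\mathbb{Q}(\zeta_N)[{\bf p}_k^r]_{k\ge1,0\le r\le N-1}$, viewed as functions on partitions. The $N$-core $\lambda^{\mathrm{mod}\,N}$ is what remains after removing $N$-rim hooks (connected boundary strips of $N$ boxes whose removal leaves a Young diagram) as long as possible. $t$-quotients: for $S=\{\lambda_j-j\}_{j\ge1}$ and each residue $a$ mod $t$, $\{(s-a)/t:s\in S,s\equiv a\bmod t\}$ is, up to an integer shift, $\{\rho_j-j\}_{j\ge1}$ for a unique partition $\rho=:\lambda^{a/t}$. *)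

theory Defs
  imports "HOL-Analysis.Analysis" "HOL-Computational_Algebra.Computational_Algebra"
begin

text \<open>A partition is a weakly decreasing list of positive naturals; part lam i is the
  i-th part (1-indexed), zero beyond the length.\<close>

definition is_partition :: "nat list \<Rightarrow> bool" where
  "is_partition lam \<longleftrightarrow> sorted_wrt (\<ge>) lam \<and> 0 \<notin> set lam"

definition part :: "nat list \<Rightarrow> nat \<Rightarrow> nat" where
  "part lam i = (if 1 \<le> i \<and> i \<le> length lam then lam ! (i - 1) else 0)"

text \<open>B_n via the generating function z/(e^z - 1) = sum B_n z^n/n!.\<close>
definition bernoulli_num :: "nat \<Rightarrow> real" where
  "bernoulli_num n = fact n * fps_nth (inverse (fps_shift 1 (fps_exp (1::real) - 1))) n"

definition zeta_neg :: "nat \<Rightarrow> real" where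
  "zeta_neg k = (-1) ^ k * bernoulli_num (k + 1) / real (k + 1)"

definition pk :: "nat \<Rightarrow> nat list \<Rightarrow> real" where
  "pk k lam = (1 - 1 / 2 ^ k) * zeta_neg k
     + (\<Sum>i = 1..length lam. (real (part lam i) - real i + 1/2) ^ k - (- real i + 1/2) ^ k)"

definition zN :: "nat \<Rightarrow> complex" where
  "zN N = cis (2 * pi / real N)"

definition ckr :: "nat \<Rightarrow> nat \<Rightarrow> nat \<Rightarrow> complex" where
  "ckr N r k = (if r = 0 then complex_of_real ((1 - 1 / 2 ^ k) * zeta_neg k)
     else fact k * fps_nth (inverse (fps_exp (1/2) - fps_const (zN N powi (- int r)) * fps_exp (-1/2))) k)"

definition pkr :: "nat \<Rightarrow> nat \<Rightarrow> nat \<Rightarrow> nat list \<Rightarrow> complex" where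
  "pkr N r k lam = ckr N r k
     + (\<Sum>i = 1..length lam.
          zN N powi (int r * (int (part lam i) - int i + 1)) * (complex_of_real (real (part lam i) - real i + 1/2)) ^ k
        - zN N powi (int r * (1 - int i)) * (complex_of_real (- real i + 1/2)) ^ k)"

definition Qzeta :: "nat \<Rightarrow> complex set" where
  "Qzeta N = {poly (map_poly of_rat p) (zN N) | p. True}"

inductive_set LambdaN :: "nat \<Rightarrow> (nat list \<Rightarrow> complex) set" for N :: nat where
  const: "c \<in> Qzeta N \<Longrightarrow> (\<lambda>_. c) \<in> LambdaN N"
| gen: "1 \<le> k \<Longrightarrow> r < N \<Longrightarrow> pkr N r k \<in> LambdaN N"
| add: "f \<in> LambdaN N \<Longrightarrow> g \<in> LambdaN N \<Longrightarrow> (\<lambda>x. f x + g x) \<in> LambdaN N"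
| mult: "f \<in> LambdaN N \<Longrightarrow> g \<in> LambdaN N \<Longrightarrow> (\<lambda>x. f x * g x) \<in> LambdaN N"

definition diag :: "nat list \<Rightarrow> (nat \<times> nat) set" where
  "diag lam = {(i, j). 1 \<le> i \<and> 1 \<le> j \<and> j \<le> part lam i}"

definition cell_adj :: "nat \<times> nat \<Rightarrow> nat \<times> nat \<Rightarrow> bool" where
  "cell_adj x y \<longleftrightarrow> (fst x = fst y \<and> (snd y = snd x + 1 \<or> snd x = snd y + 1))
                    \<or> (snd x = snd y \<and> (fst y = fst x + 1 \<or> fst x = fst y + 1))"

definition cells_connected :: "(nat \<times> nat) set \<Rightarrow> bool" where
  "cells_connected D \<longleftrightarrow>
     (\<forall>x\<in>D. \<forall>y\<in>D. (\<lambda>u v. u \<in> D \<and> v \<in> D \<and> cell_adj u v)\<^sup>*\<^sup>* x y)"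

text \<open>mu arises from lam by removing an N-rim hook: lam/mu is a connected set of N cells
  lying on the boundary (rim) of lam, and mu is again a partition.\<close>
definition rim_hook_removal :: "nat \<Rightarrow> nat list \<Rightarrow> nat list \<Rightarrow> bool" where
  "rim_hook_removal N lam mu \<longleftrightarrow> is_partition mu \<and> diag mu \<subseteq> diag lam \<and>
     (let D = diag lam - diag mu in
        card D = N \<and> cells_connected D \<and> (\<forall>(i, j)\<in>D. (i + 1, j + 1) \<notin> diag lam))"

definition is_core :: "nat \<Rightarrow> nat list \<Rightarrow> bool" where
  "is_core N eta \<longleftrightarrow> \<not> (\<exists>mu. rim_hook_removal N eta mu)"

definition core_of :: "nat \<Rightarrow> nat list \<Rightarrow> nat list \<Rightarrow> bool" where
  "core_of N lam eta \<longleftrightarrow> (rim_hook_removal N)\<^sup>*\<^sup>* lam eta \<and> is_core N eta"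

definition beta_set :: "nat list \<Rightarrow> int set" where
  "beta_set lam = {int (part lam j) - int j | j. 1 \<le> j}"

definition quot_set :: "nat \<Rightarrow> nat \<Rightarrow> nat list \<Rightarrow> int set" where
  "quot_set t a lam = {(s - int a) div int t | s. s \<in> beta_set lam \<and> s mod int t = int a}"

definition t_quotient :: "nat \<Rightarrow> nat \<Rightarrow> nat list \<Rightarrow> nat list" where
  "t_quotient t a lam = (THE rho. is_partition rho \<and>
      (\<exists>c::int. quot_set t a lam = (\<lambda>x. x + c) ` beta_set rho))"

end

theory Submission
  imports Defs
begin

text \<open>A partition is encoded by its beta set \<open>{\<lambda>\<^sub>i - i}\<close>. The \<open>a\<close>-th \<open>t\<close>-quotient consists of the
  beta numbers \<open>s \<equiv> a (mod t)\<close>, rescaled by \<open>s \<mapsto> (s - a) div t\<close> and shifted by a charge \<open>c\<close>, so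
  \<open>p\<^sub>k\<close> of the quotient is a regularized sum over the beta numbers of \<open>\<lambda>\<close> of
  \<open>s \<mapsto> [s \<equiv> a (mod t)] ((s - a) div t - c + 1/2)\<^sup>k\<close>. Writing the indicator of the residue class
  as an average of \<open>t\<close>-th roots of unity turns this function into a \<open>\<rat>(\<zeta>\<^sub>N)\<close>-combination of
  \<open>\<zeta>\<^sub>N^(r(s + 1)) (s + 1/2)^m\<close>, whose regularized sums are \<open>p_m^r\<close> up to constants.
  Removing an \<open>N\<close>-rim hook removes \<open>N\<close> cells of consecutive contents, so the regularized sum of
  any \<open>N\<close>-periodic function is constant on the partitions with a given \<open>N\<close>-core. This pins down
  the charge \<open>c\<close> and the terms with \<open>m = 0\<close>, which are the only ones not in \<open>\<Lambda>\<^sub>N\<^sup>*\<close>.\<close>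

section \<open>Beta sets\<close>

lemma part_Nil [simp]: "part [] i = 0"
  by (simp add: part_def)

lemma part_Cons_1 [simp]: "part (x # l) (Suc 0) = x"
  by (simp add: part_def)

lemma part_Cons_Suc: "1 \<le> j \<Longrightarrow> part (x # l) (Suc j) = part l j"
  by (simp add: part_def)

lemma is_partition_Cons:
  "is_partition (x # l) \<longleftrightarrow> 0 < x \<and> (\<forall>y\<in>set l. y \<le> x) \<and> is_partition l"
  by (auto simp: is_partition_def)

lemma part_antimono:
  assumes "is_partition lam" "1 \<le> i" "i \<le> j"
  shows "part lam j \<le> part lam i"
proof (cases "i < j \<and> j \<le> length lam")
  case True
  have "sorted_wrt (\<ge>) lam" using assms(1) by (simp add: is_partition_def)
  moreover have "i - 1 < j - 1" "j - 1 < length lam" using True assms(2) by auto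
  ultimately have "lam ! (j - 1) \<le> lam ! (i - 1)" by (simp add: sorted_wrt_iff_nth_less)
  then show ?thesis using True assms(2) by (simp add: part_def)
next
  case False
  then show ?thesis using assms(3) by (auto simp: part_def)
qed

lemma part_le_hd: "is_partition (x # l) \<Longrightarrow> part l 1 \<le> x"
  by (cases l) (auto simp: is_partition_def part_def)

lemma beta_set_below_length:
  assumes "s < - int (length lam)"
  shows "s \<in> beta_set lam"
proof -
  have "length lam < nat (- s)" using assms by linarith
  then have "s = int (part lam (nat (- s))) - int (nat (- s)) \<and> 1 \<le> nat (- s)"
    using assms by (simp add: part_def)
  then show ?thesis unfolding beta_set_def by blast
qed

lemma beta_set_Nil: "beta_set [] = {..-1}"
  using beta_set_below_length[of _ "[]"] unfolding beta_set_def by fastforce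

lemma beta_set_Cons: "beta_set (x # l) = insert (int x - 1) ((\<lambda>u. u - 1) ` beta_set l)"
proof -
  have "int (part (x # l) j) - int j \<in> insert (int x - 1) ((\<lambda>u. u - 1) ` beta_set l)"
    if j: "1 \<le> j" for j
  proof (cases "j = 1")
    case False
    then obtain j' where j': "j = Suc j'" "1 \<le> j'" using j by (cases j) auto
    have "int (part l j') - int j' \<in> beta_set l" using j' unfolding beta_set_def by blast
    then show ?thesis using j' by (force simp: part_Cons_Suc)
  qed simp
  moreover have "int x - 1 \<in> beta_set (x # l)"
    unfolding beta_set_def by (rule CollectI, rule exI[of _ 1]) simp
  moreover have "u - 1 \<in> beta_set (x # l)" if u: "u \<in> beta_set l" for u
  proof -
    obtain j where j: "u = int (part l j) - int j" "1 \<le> j" using u unfolding beta_set_def by blast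
    then have "u - 1 = int (part (x # l) (Suc j)) - int (Suc j)" by (simp add: part_Cons_Suc)
    then show ?thesis unfolding beta_set_def by fastforce
  qed
  ultimately show ?thesis unfolding beta_set_def[of "x # l"] by blast
qed

lemma beta_set_le_part_1:
  assumes "is_partition l" "u \<in> beta_set l"
  shows "u \<le> int (part l 1) - 1"
proof -
  obtain j where j: "u = int (part l j) - int j" "1 \<le> j" using assms(2) unfolding beta_set_def by blast
  then show ?thesis using part_antimono[OF assms(1), of 1 j] by simp
qed

lemma inj_on_beta_numbers:
  assumes "is_partition l"
  shows "inj_on (\<lambda>i. int (part l i) - int i) {1..n}"
proof -
  have "int (part l j) - int j < int (part l i) - int i" if "1 \<le> i" "i < j" for i j
    using part_antimono[OF assms, of i j] that by simp
  then show ?thesis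
    by (intro inj_onI) (metis atLeastAtMost_iff less_irrefl linorder_neqE_nat)
qed

lemma beta_set_inter_atLeast:
  assumes "is_partition l" "length l \<le> n"
  shows "beta_set l \<inter> {- int n..} = (\<lambda>i. int (part l i) - int i) ` {1..n}"
proof -
  have "u \<in> (\<lambda>i. int (part l i) - int i) ` {1..n}" if u: "u \<in> beta_set l" "u \<ge> - int n" for u
  proof -
    obtain j where j: "u = int (part l j) - int j" "1 \<le> j" using u(1) unfolding beta_set_def by blast
    have "j \<le> n"
    proof (rule ccontr)
      assume "\<not> j \<le> n"
      then show False using j u(2) assms(2) by (simp add: part_def)
    qed
    then show ?thesis using j by auto
  qed
  moreover have "int (part l i) - int i \<in> beta_set l \<inter> {- int n..}" if "i \<in> {1..n}" for i
    using that unfolding beta_set_def by auto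
  ultimately show ?thesis by blast
qed

definition beta_sum :: "(int \<Rightarrow> 'a::comm_monoid_add) \<Rightarrow> nat list \<Rightarrow> nat \<Rightarrow> 'a" where
  "beta_sum F lam n = (\<Sum>i = 1..n. F (int (part lam i) - int i))"

lemma sum_beta_set_inter_atLeast:
  assumes "is_partition l" "length l \<le> n"
  shows "(\<Sum>u \<in> beta_set l \<inter> {- int n..}. F u) = beta_sum F l n"
  unfolding beta_set_inter_atLeast[OF assms] beta_sum_def
  by (subst sum.reindex[OF inj_on_beta_numbers[OF assms(1)]]) simp

lemma card_beta_set_inter_atLeast:
  assumes "is_partition l" "length l \<le> n"
  shows "card (beta_set l \<inter> {- int n..}) = n"
  unfolding beta_set_inter_atLeast[OF assms]
  by (subst card_image[OF inj_on_beta_numbers[OF assms(1)]]) simp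

lemma finite_beta_set_inter_atLeast:
  assumes "is_partition l" "length l \<le> n"
  shows "finite (beta_set l \<inter> {- int n..})"
  unfolding beta_set_inter_atLeast[OF assms] by simp

lemma beta_set_eq_Nil_if_bounded:
  assumes "{..- int m - 1} \<subseteq> Y" "finite (Y \<inter> {- int m..})" "card (Y \<inter> {- int m..}) = m"
    and "Y \<inter> {- int m..} \<subseteq> {..-1}"
  shows "Y = beta_set []"
proof -
  have "Y \<inter> {- int m..} \<subseteq> {- int m..-1}" using assms(4) by auto
  moreover have "card {- int m..-1} = m" by simp
  ultimately have upper: "Y \<inter> {- int m..} = {- int m..-1}" using assms(3) by (intro card_subset_eq) auto
  show ?thesis unfolding beta_set_Nil
  proof (intro set_eqI iffI)
    fix u assume "u \<in> Y"
    then show "u \<in> {..-1}" using upper by (cases "u < - int m") auto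
  next
    fix u :: int assume "u \<in> {..-1}"
    then show "u \<in> Y" using upper assms(1) by (cases "u < - int m") auto
  qed
qed

lemma partition_Cons_of_beta_set:
  assumes "is_partition \<rho>" "beta_set \<rho> = (\<lambda>u. u + 1) ` (Y - {y})"
    and "y \<in> Y" "0 \<le> y" "\<forall>u\<in>Y. u \<le> y"
  shows "is_partition (nat (y + 1) # \<rho>) \<and> beta_set (nat (y + 1) # \<rho>) = Y"
proof -
  define x where "x = nat (y + 1)"
  have hd: "part \<rho> 1 \<le> x"
  proof (cases "part \<rho> 1 = 0")
    case False
    have "int (part \<rho> 1) - 1 \<in> beta_set \<rho>"
      unfolding beta_set_def by (rule CollectI, rule exI[of _ 1]) simp
    then have "int (part \<rho> 1) - 1 \<in> (\<lambda>u. u + 1) ` (Y - {y})" unfolding assms(2) .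
    then obtain u where "int (part \<rho> 1) - 1 = u + 1" "u \<in> Y - {y}" by (rule imageE)
    then show ?thesis using assms(5) x_def by force
  qed simp
  have "\<forall>z\<in>set \<rho>. z \<le> x"
  proof
    fix z assume "z \<in> set \<rho>"
    then obtain i where "i < length \<rho>" "z = part \<rho> (Suc i)"
      by (auto simp: in_set_conv_nth part_def)
    then show "z \<le> x" using part_antimono[OF assms(1), of 1 "Suc i"] hd by simp
  qed
  then have "is_partition (x # \<rho>)" using assms(1,4) x_def by (simp add: is_partition_Cons)
  moreover have "beta_set (x # \<rho>) = Y"
    using assms(3,4) unfolding beta_set_Cons assms(2) x_def by (auto simp: image_image)
  ultimately show ?thesis unfolding x_def ..
qed

lemma partition_of_beta_set:
  assumes "{..- int m - 1} \<subseteq> Y" "finite (Y \<inter> {- int m..})" "card (Y \<inter> {- int m..}) = m"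
  shows "\<exists>\<rho>. is_partition \<rho> \<and> beta_set \<rho> = Y"
  using assms
proof (induction m arbitrary: Y)
  case 0
  then have "Y = beta_set []" by (intro beta_set_eq_Nil_if_bounded[of 0]) auto
  then show ?case by (intro exI[of _ "[]"]) (simp add: is_partition_def)
next
  case (Suc m)
  define Z where "Z = Y \<inter> {- int (Suc m)..}"
  show ?case
  proof (cases "Z \<subseteq> {..-1}")
    case True
    then have "Y = beta_set []" using Suc.prems unfolding Z_def by (intro beta_set_eq_Nil_if_bounded)
    then show ?thesis by (intro exI[of _ "[]"]) (simp add: is_partition_def)
  next
    case False
    have Z: "finite Z" "card Z = Suc m" using Suc.prems Z_def by auto
    define y where "y = Max Z"
    have "Z \<noteq> {}" using Z by auto
    then have "y \<in> Z" and y_max: "\<And>z. z \<in> Z \<Longrightarrow> z \<le> y" using Z y_def by auto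
    have "0 \<le> y" using False y_max by fastforce
    have "\<forall>u\<in>Y. u \<le> y"
    proof
      fix u assume "u \<in> Y"
      then show "u \<le> y"
        using y_max[of u] \<open>0 \<le> y\<close> unfolding Z_def by (cases "u < - int (Suc m)") auto
    qed
    define Y' where "Y' = (\<lambda>u. u + 1) ` (Y - {y})"
    have "Y' \<inter> {- int m..} = (\<lambda>u. u + 1) ` (Z - {y})"
      unfolding Y'_def Z_def by force
    moreover have "card ((\<lambda>u. u + 1) ` (Z - {y})) = m"
      using Z \<open>y \<in> Z\<close> by (subst card_image) (auto simp: inj_on_def)
    moreover have "{..- int m - 1} \<subseteq> Y'"
    proof
      fix u assume "u \<in> {..- int m - 1}"
      then have "u - 1 \<in> Y - {y}" using Suc.prems(1) \<open>0 \<le> y\<close> by auto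
      then show "u \<in> Y'" unfolding Y'_def by (intro image_eqI[of _ _ "u - 1"]) auto
    qed
    ultimately obtain \<rho>' where "is_partition \<rho>'" "beta_set \<rho>' = Y'"
      using Suc.IH[of Y'] Z(1) by auto
    moreover have "y \<in> Y" using \<open>y \<in> Z\<close> unfolding Z_def by simp
    ultimately show ?thesis
      using partition_Cons_of_beta_set[of \<rho>' Y y] \<open>0 \<le> y\<close> \<open>\<forall>u\<in>Y. u \<le> y\<close>
      unfolding Y'_def by blast
  qed
qed

lemma beta_set_Cons_remove_hd:
  assumes "is_partition (x # l)"
  shows "beta_set (x # l) - {int x - 1} = (\<lambda>u. u - 1) ` beta_set l"
proof -
  have "u - 1 < int x - 1" if "u \<in> beta_set l" for u
    using beta_set_le_part_1[OF _ that] part_le_hd[OF assms] assms by (simp add: is_partition_Cons)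
  then have "int x - 1 \<notin> (\<lambda>u. u - 1) ` beta_set l" by fastforce
  then show ?thesis unfolding beta_set_Cons by auto
qed

lemma beta_set_Cons_neq_Nil:
  assumes "0 < x"
  shows "beta_set (x # l) \<noteq> beta_set []"
proof
  have "int x - 1 \<in> beta_set (x # l)" by (simp add: beta_set_Cons)
  moreover assume "beta_set (x # l) = beta_set []"
  ultimately show False using assms by (simp add: beta_set_Nil)
qed

lemma beta_set_inject:
  "is_partition r1 \<Longrightarrow> is_partition r2 \<Longrightarrow> beta_set r1 = beta_set r2 \<Longrightarrow> r1 = r2"
proof (induction r1 arbitrary: r2)
  case Nil
  show ?case
  proof (cases r2)
    case (Cons y l2)
    then have "0 < y" using Nil.prems(2) by (simp add: is_partition_Cons)
    then show ?thesis using Nil.prems(3) beta_set_Cons_neq_Nil Cons by metis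
  qed simp
next
  case (Cons x l1)
  have "0 < x" using Cons.prems(1) by (simp add: is_partition_Cons)
  show ?case
  proof (cases r2)
    case Nil
    then show ?thesis using Cons.prems(3) beta_set_Cons_neq_Nil \<open>0 < x\<close> by metis
  next
    case (Cons y l2)
    note eq = Cons.prems(3)[unfolded Cons]
    have "int x - 1 \<in> beta_set (x # l1)" "int y - 1 \<in> beta_set (y # l2)"
      by (simp_all add: beta_set_Cons)
    then have "int x - 1 \<in> beta_set (y # l2)" "int y - 1 \<in> beta_set (x # l1)"
      using eq by blast+
    then have "int x - 1 \<le> int y - 1" "int y - 1 \<le> int x - 1"
      using beta_set_le_part_1 Cons.prems(1,2) unfolding Cons by fastforce+
    then have "x = y" by simp
    have "(\<lambda>u. u - 1) ` beta_set l1 = (\<lambda>u. u - 1) ` beta_set l2"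
      using beta_set_Cons_remove_hd[OF Cons.prems(1)] beta_set_Cons_remove_hd[of y l2]
        Cons.prems(2) eq \<open>x = y\<close> unfolding Cons by simp
    then have "beta_set l1 = beta_set l2" by (simp add: inj_image_eq_iff inj_on_def)
    then have "l1 = l2"
      using Cons.IH Cons.prems(1,2) unfolding Cons by (simp add: is_partition_Cons)
    then show ?thesis using \<open>x = y\<close> Cons by simp
  qed
qed

lemma image_add_inter_atLeast:
  "(\<lambda>x. x + (c::int)) ` B \<inter> {X..} = (\<lambda>x. x + c) ` (B \<inter> {X - c..})"
  by (auto simp: image_iff)

lemma card_shifted_beta_set_inter_atLeast:
  assumes "is_partition r" "int (length r) \<le> c - X"
  shows "card ((\<lambda>x. x + c) ` beta_set r \<inter> {X..}) = nat (c - X)"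
proof -
  have "card ((\<lambda>x. x + c) ` beta_set r \<inter> {X..}) = card (beta_set r \<inter> {X - c..})"
    unfolding image_add_inter_atLeast by (rule card_image) (simp add: inj_on_def)
  also have "{X - c..} = {- int (nat (c - X))..}" using assms(2) by simp
  also have "card (beta_set r \<inter> {- int (nat (c - X))..}) = nat (c - X)"
    using assms(2) by (intro card_beta_set_inter_atLeast[OF assms(1)]) linarith
  finally show ?thesis .
qed

lemma shifted_beta_set_inject:
  assumes "is_partition r1" "is_partition r2"
    and eq: "(\<lambda>x. x + c1) ` beta_set r1 = (\<lambda>x. x + c2) ` beta_set r2"
  shows "r1 = r2 \<and> c1 = c2"
proof -
  define X where "X = - int (length r1) - int (length r2) - \<bar>c1\<bar> - \<bar>c2\<bar>"
  have X: "int (length r1) \<le> c1 - X" "int (length r2) \<le> c2 - X" unfolding X_def by auto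
  have "nat (c1 - X) = card ((\<lambda>x. x + c2) ` beta_set r2 \<inter> {X..})"
    using card_shifted_beta_set_inter_atLeast[OF assms(1) X(1), symmetric] unfolding eq .
  also have "\<dots> = nat (c2 - X)" using card_shifted_beta_set_inter_atLeast[OF assms(2) X(2)] .
  finally have c: "c1 = c2" using X eq_nat_nat_iff[of "c1 - X" "c2 - X"] by linarith
  have "inj (\<lambda>x. x + c2)" by (simp add: inj_on_def)
  then have "beta_set r1 = beta_set r2" using eq unfolding c by (simp add: inj_image_eq_iff)
  then show ?thesis using beta_set_inject assms(1,2) c by blast
qed

lemma t_quotient_eqI:
  assumes "is_partition \<rho>" "quot_set t a lam = (\<lambda>x. x + c) ` beta_set \<rho>"
  shows "t_quotient t a lam = \<rho>"
  unfolding t_quotient_def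
proof (rule the_equality)
  show "is_partition \<rho> \<and> (\<exists>c. quot_set t a lam = (\<lambda>x. x + c) ` beta_set \<rho>)"
    using assms by (intro conjI exI)
next
  fix r assume "is_partition r \<and> (\<exists>c. quot_set t a lam = (\<lambda>x. x + c) ` beta_set r)"
  then obtain c' where r: "is_partition r" "quot_set t a lam = (\<lambda>x. x + c') ` beta_set r" by blast
  show "r = \<rho>" using shifted_beta_set_inject[OF r(1) assms(1) r(2)[symmetric, unfolded assms(2)]] ..
qed

section \<open>Quotients\<close>

lemma shifted_beta_set_of_set:
  assumes "{..B - 1} \<subseteq> Q" "finite (Q \<inter> {B..})"
  shows "\<exists>\<rho> c. is_partition \<rho> \<and> Q = (\<lambda>x. x + c) ` beta_set \<rho>"
proof -
  define K where "K = card (Q \<inter> {B..})"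
  define d where "d = int K + B"
  define Y where "Y = (\<lambda>v. v - d) ` Q"
  have Y_upper: "Y \<inter> {- int K..} = (\<lambda>v. v - d) ` (Q \<inter> {B..})"
    unfolding Y_def d_def by (auto simp: image_iff)
  have "{..- int K - 1} \<subseteq> Y"
  proof
    fix y assume "y \<in> {..- int K - 1}"
    then have "y + d \<in> Q" using assms(1) d_def by auto
    then show "y \<in> Y" unfolding Y_def by (intro image_eqI[of _ _ "y + d"]) auto
  qed
  moreover have "finite (Y \<inter> {- int K..})" using assms(2) unfolding Y_upper by simp
  moreover have "card (Y \<inter> {- int K..}) = K"
    unfolding Y_upper by (simp add: K_def card_image inj_on_def)
  ultimately obtain \<rho> where "is_partition \<rho>" "beta_set \<rho> = Y" using partition_of_beta_set by blast
  moreover have "Q = (\<lambda>x. x + d) ` Y" unfolding Y_def by (simp add: image_image)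
  ultimately show ?thesis by blast
qed

lemma eq_mult_div_add_if_mod_eq:
  fixes s t a :: int
  assumes "0 < t" "s mod t = a"
  shows "s = t * ((s - a) div t) + a"
proof -
  have "(s - a) mod t = 0" using assms by (simp add: mod_diff_left_eq[symmetric])
  then show ?thesis using div_mult_mod_eq[of "s - a" t] by (simp add: mult.commute)
qed

definition quotient_lift :: "nat \<Rightarrow> nat \<Rightarrow> int \<Rightarrow> (int \<Rightarrow> 'a::zero) \<Rightarrow> int \<Rightarrow> 'a" where
  "quotient_lift t a c F s = (if s mod int t = int a then F ((s - int a) div int t - c) else 0)"

lemma quot_set_inter_atLeast:
  assumes "0 < t"
  shows "quot_set t a lam \<inter> {X..} = (\<lambda>s. (s - int a) div int t) `
    {s \<in> beta_set lam \<inter> {int t * X + int a..}. s mod int t = int a}"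
proof -
  have "X \<le> (s - int a) div int t \<longleftrightarrow> int t * X + int a \<le> s" if "s mod int t = int a" for s
  proof -
    have "s = int t * ((s - int a) div int t) + int a"
      using eq_mult_div_add_if_mod_eq[OF _ that] assms by simp
    then have "int t * X + int a \<le> s \<longleftrightarrow> int t * X \<le> int t * ((s - int a) div int t)" by linarith
    then show ?thesis using assms by (simp add: mult_le_cancel_left_pos)
  qed
  then show ?thesis unfolding quot_set_def by auto
qed

lemma sum_quot_set_inter_atLeast:
  assumes "0 < t" "is_partition lam" "int (length lam) \<le> - (int t * X + int a)"
  shows "(\<Sum>v \<in> quot_set t a lam \<inter> {X..}. F (v - c)) =
      beta_sum (quotient_lift t a c F) lam (nat (- (int t * X + int a)))"
    and "finite (quot_set t a lam \<inter> {X..})"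
proof -
  define n where "n = nat (- (int t * X + int a))"
  have n: "length lam \<le> n" "- int n = int t * X + int a" using assms(3) unfolding n_def by auto
  have fin: "finite (beta_set lam \<inter> {int t * X + int a..})"
    using finite_beta_set_inter_atLeast[OF assms(2) n(1)] unfolding n(2) .
  have inj: "inj_on (\<lambda>s. (s - int a) div int t) {s \<in> A. s mod int t = int a}" for A
  proof (rule inj_onI)
    fix s1 s2 assume "s1 \<in> {s \<in> A. s mod int t = int a}" "s2 \<in> {s \<in> A. s mod int t = int a}"
      and eq: "(s1 - int a) div int t = (s2 - int a) div int t"
    then have "s1 mod int t = int a" "s2 mod int t = int a" by simp_all
    then have "s1 = int t * ((s1 - int a) div int t) + int a" "s2 = int t * ((s2 - int a) div int t) + int a"
      using eq_mult_div_add_if_mod_eq assms(1) of_nat_0_less_iff by blast+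
    then show "s1 = s2" unfolding eq by metis
  qed
  have "(\<Sum>v \<in> quot_set t a lam \<inter> {X..}. F (v - c)) =
      (\<Sum>s \<in> {s \<in> beta_set lam \<inter> {int t * X + int a..}. s mod int t = int a}. F ((s - int a) div int t - c))"
    unfolding quot_set_inter_atLeast[OF assms(1)] by (rule sum.reindex[OF inj, unfolded comp_def])
  also have "\<dots> = (\<Sum>s \<in> beta_set lam \<inter> {int t * X + int a..}. quotient_lift t a c F s)"
    unfolding quotient_lift_def by (rule sum.inter_filter[OF fin])
  also have "\<dots> = beta_sum (quotient_lift t a c F) lam n"
    using sum_beta_set_inter_atLeast[OF assms(2) n(1)] unfolding n(2) .
  finally show "(\<Sum>v \<in> quot_set t a lam \<inter> {X..}. F (v - c)) = beta_sum (quotient_lift t a c F) lam n" .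
  show "finite (quot_set t a lam \<inter> {X..})"
    unfolding quot_set_inter_atLeast[OF assms(1)] using fin by (intro finite_imageI) (rule finite_subset[OF _ fin], auto)
qed

lemma quot_set_is_shifted_beta_set:
  assumes "0 < t" "a < t" "is_partition lam"
  shows "\<exists>\<rho> c. is_partition \<rho> \<and> quot_set t a lam = (\<lambda>x. x + c) ` beta_set \<rho>"
proof (rule shifted_beta_set_of_set)
  define B where "B = - int (length lam) - 1"
  have "int a < int t" "int (length lam) \<le> int t * int (length lam)"
    using assms(1,2) mult_right_mono[of 1 "int t" "int (length lam)"] by simp_all
  then have "int (length lam) \<le> - (int t * B + int a)"
    unfolding B_def by (simp add: algebra_simps)
  then show "finite (quot_set t a lam \<inter> {B..})"
    using sum_quot_set_inter_atLeast(2)[OF assms(1,3)] by blast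
  show "{..B - 1} \<subseteq> quot_set t a lam"
  proof
    fix v assume "v \<in> {..B - 1}"
    define s where "s = int t * v + int a"
    have "int t * v \<le> int t * (B - 1)" using \<open>v \<in> {..B - 1}\<close> by (simp add: mult_left_mono)
    then have "s < - int (length lam)"
      using assms(1,2) mult_right_mono[of 1 "int t" "int (length lam)"] unfolding s_def B_def
      by (simp add: algebra_simps)
    then have "s \<in> beta_set lam" by (rule beta_set_below_length)
    moreover have "s mod int t = int a" "(s - int a) div int t = v" unfolding s_def using assms by simp_all
    ultimately show "v \<in> quot_set t a lam" unfolding quot_set_def by blast
  qed
qed

lemma beta_sum_shifted_quotient:
  assumes "0 < t" "is_partition lam" "is_partition \<rho>"
    and "quot_set t a lam = (\<lambda>x. x + c) ` beta_set \<rho>"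
    and "int (length \<rho>) \<le> c - X" "int (length lam) \<le> - (int t * X + int a)"
  shows "beta_sum F \<rho> (nat (c - X)) = beta_sum (quotient_lift t a c F) lam (nat (- (int t * X + int a)))"
proof -
  have len: "length \<rho> \<le> nat (c - X)" and shift: "X - c = - int (nat (c - X))" using assms(5) by auto
  have "beta_sum F \<rho> (nat (c - X)) = (\<Sum>u\<in>beta_set \<rho> \<inter> {X - c..}. F u)"
    unfolding shift by (rule sum_beta_set_inter_atLeast[OF assms(3) len, symmetric])
  also have "\<dots> = (\<Sum>v\<in>(\<lambda>x. x + c) ` (beta_set \<rho> \<inter> {X - c..}). F (v - c))"
    by (subst sum.reindex) (auto simp: inj_on_def)
  also have "(\<lambda>x. x + c) ` (beta_set \<rho> \<inter> {X - c..}) = quot_set t a lam \<inter> {X..}"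
    unfolding assms(4) image_add_inter_atLeast ..
  also have "(\<Sum>v\<in>quot_set t a lam \<inter> {X..}. F (v - c)) =
      beta_sum (quotient_lift t a c F) lam (nat (- (int t * X + int a)))"
    by (rule sum_quot_set_inter_atLeast(1)[OF assms(1,2,6)])
  finally show ?thesis .
qed

section \<open>Regularized sums and rim hooks\<close>

definition reg_beta_sum :: "(int \<Rightarrow> 'a::ab_group_add) \<Rightarrow> nat list \<Rightarrow> 'a" where
  "reg_beta_sum F lam = (\<Sum>i = 1..length lam. F (int (part lam i) - int i) - F (- int i))"

lemma reg_beta_sum_eq_beta_sum_diff:
  assumes "length lam \<le> n"
  shows "reg_beta_sum F lam = beta_sum F lam n - beta_sum F [] n"
proof -
  have "beta_sum F lam n - beta_sum F [] n = (\<Sum>i = 1..n. F (int (part lam i) - int i) - F (- int i))"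
    unfolding beta_sum_def by (simp add: sum_subtractf)
  also have "\<dots> = reg_beta_sum F lam"
    unfolding reg_beta_sum_def using assms by (intro sum.mono_neutral_right) (auto simp: part_def)
  finally show ?thesis ..
qed

lemma reg_beta_sum_sum:
  "reg_beta_sum (\<lambda>s. \<Sum>x\<in>I. F x s) lam = (\<Sum>x\<in>I. reg_beta_sum (F x) lam)"
  unfolding reg_beta_sum_def by (simp add: sum_subtractf[symmetric]) (rule sum.swap)

lemma reg_beta_sum_mult:
  "reg_beta_sum (\<lambda>s. c * F s) lam = (c :: 'a::comm_ring) * reg_beta_sum F lam"
  unfolding reg_beta_sum_def by (simp add: sum_distrib_left right_diff_distrib)

lemma diag_eq_Sigma: "diag lam = Sigma {1..length lam} (\<lambda>i. {1..part lam i})"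
  unfolding diag_def by (auto simp: part_def split: if_splits)

lemma finite_diag: "finite (diag lam)"
  unfolding diag_eq_Sigma by simp

definition cell_content :: "nat \<times> nat \<Rightarrow> int" where
  "cell_content p = int (snd p) - int (fst p)"

text \<open>Each row of the diagram telescopes, which turns the regularized sum into a sum over cells.\<close>

lemma reg_beta_sum_eq_sum_diag:
  "reg_beta_sum \<phi> lam = (\<Sum>p\<in>diag lam. \<phi> (cell_content p) - \<phi> (cell_content p - 1))"
proof -
  have row: "(\<Sum>j = 1..p. \<phi> (int j - int i) - \<phi> (int j - int i - 1)) = \<phi> (int p - int i) - \<phi> (- int i)"
    for p i
    using sum_Suc_diff[of 1 p "\<lambda>j. \<phi> (int j - int i - 1)"] by (simp add: algebra_simps)
  have "(\<Sum>p\<in>diag lam. \<phi> (cell_content p) - \<phi> (cell_content p - 1))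
      = (\<Sum>(i, j)\<in>diag lam. \<phi> (int j - int i) - \<phi> (int j - int i - 1))"
    by (simp add: cell_content_def case_prod_beta)
  also have "\<dots> = (\<Sum>i = 1..length lam. \<Sum>j = 1..part lam i. \<phi> (int j - int i) - \<phi> (int j - int i - 1))"
    unfolding diag_eq_Sigma by (subst sum.Sigma) auto
  also have "\<dots> = reg_beta_sum \<phi> lam"
    unfolding row reg_beta_sum_def ..
  finally show ?thesis ..
qed

lemma cell_content_adj: "cell_adj u v \<Longrightarrow> cell_content v = cell_content u + 1 \<or> cell_content v = cell_content u - 1"
  unfolding cell_adj_def cell_content_def by auto

lemma cell_content_path_interval:
  assumes "(\<lambda>u v. u \<in> D \<and> v \<in> D \<and> cell_adj u v)\<^sup>*\<^sup>* x y" "x \<in> D"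
  shows "{min (cell_content x) (cell_content y)..max (cell_content x) (cell_content y)} \<subseteq> cell_content ` D"
  using assms(1)
proof (induction rule: rtranclp_induct)
  case (step y w)
  then have "w \<in> D" and adj: "cell_content w = cell_content y + 1 \<or> cell_content w = cell_content y - 1"
    using cell_content_adj by blast+
  show ?case
  proof
    fix z assume z: "z \<in> {min (cell_content x) (cell_content w)..max (cell_content x) (cell_content w)}"
    show "z \<in> cell_content ` D"
    proof (cases "z = cell_content w")
      case False
      then have "z \<in> {min (cell_content x) (cell_content y)..max (cell_content x) (cell_content y)}"
        using z adj by auto
      then show ?thesis using step.IH by blast
    qed (use \<open>w \<in> D\<close> in blast)
  qed
qed (use assms(2) in auto)

lemma inj_on_cell_content_rim:
  assumes "is_partition lam" "D \<subseteq> diag lam" "\<forall>(i, j)\<in>D. (i + 1, j + 1) \<notin> diag lam"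
  shows "inj_on cell_content D"
proof -
  have key: False if "(i, j) \<in> D" "(i', j') \<in> D" "cell_content (i, j) = cell_content (i', j')" "i < i'" for i j i' j'
  proof -
    have "j' \<le> part lam i'" "1 \<le> i" "1 \<le> j"
      using that(1,2) assms(2) unfolding diag_def by auto
    moreover have "part lam i' \<le> part lam (i + 1)"
      using part_antimono[OF assms(1), of "i + 1" i'] that(4) by simp
    ultimately have "(i + 1, j + 1) \<in> diag lam"
      using that(3,4) unfolding diag_def cell_content_def by auto
    then show False using assms(3) that(1) by auto
  qed
  show ?thesis
  proof (rule inj_onI)
    fix p q assume pq: "p \<in> D" "q \<in> D" "cell_content p = cell_content q"
    obtain i j i' j' where ij: "p = (i, j)" "q = (i', j')" by (cases p, cases q)
    show "p = q"
    proof (cases i i' rule: linorder_cases)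
      case less
      then show ?thesis using key[of i j i' j'] pq ij by simp
    next
      case equal
      then show ?thesis using pq(3) ij by (simp add: cell_content_def)
    next
      case greater
      then show ?thesis using key[of i' j' i j] pq ij by simp
    qed
  qed
qed

lemma rim_hook_contents:
  assumes "is_partition lam" "rim_hook_removal N lam mu" "0 < N"
  shows "\<exists>m. cell_content ` (diag lam - diag mu) = {m..m + int N - 1} \<and> inj_on cell_content (diag lam - diag mu)"
proof -
  define D where "D = diag lam - diag mu"
  have card: "card D = N" and conn: "cells_connected D" and rim: "\<forall>(i, j)\<in>D. (i + 1, j + 1) \<notin> diag lam"
    using assms(2) unfolding rim_hook_removal_def D_def Let_def by auto
  have inj: "inj_on cell_content D" by (rule inj_on_cell_content_rim[OF assms(1) _ rim]) (auto simp: D_def)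
  define C where "C = cell_content ` D"
  define m where "m = Min C"
  define M where "M = Max C"
  have "finite C" unfolding C_def D_def using finite_diag by simp
  moreover have "C \<noteq> {}" using card assms(3) unfolding C_def by auto
  ultimately have "m \<in> C" "M \<in> C" and C_bounds: "C \<subseteq> {m..M}" unfolding m_def M_def by auto
  then obtain x y where xy: "x \<in> D" "y \<in> D" "cell_content x = m" "cell_content y = M"
    unfolding C_def by blast
  have "m \<le> M" using \<open>m \<in> C\<close> C_bounds by auto
  then have "{m..M} \<subseteq> C"
    using cell_content_path_interval[of D x y] conn xy unfolding cells_connected_def C_def by simp
  then have interval: "C = {m..M}" using C_bounds by blast
  then have "nat (M + 1 - m) = N" using card_image[OF inj] card unfolding C_def by simp
  then have "C = {m..m + int N - 1}" using interval \<open>m \<le> M\<close> by auto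
  then show ?thesis using inj unfolding C_def D_def by blast
qed

lemma sum_interval_telescope:
  "(\<Sum>c\<in>{m..m + int n - 1}. (\<phi> c - \<phi> (c - 1) :: 'a::ab_group_add)) = \<phi> (m + int n - 1) - \<phi> (m - 1)"
proof (induction n)
  case (Suc n)
  have "{m..m + int (Suc n) - 1} = insert (m + int n) {m..m + int n - 1}" by auto
  then show ?case using Suc.IH by (simp add: algebra_simps)
qed simp

text \<open>The contents of an \<open>N\<close>-rim hook form \<open>N\<close> consecutive integers, so for an \<open>N\<close>-periodic
  \<open>\<phi>\<close> its cells contribute a telescoping sum that vanishes.\<close>

lemma reg_beta_sum_rim_hook_removal:
  assumes "is_partition lam" "rim_hook_removal N lam mu" "0 < N" "\<And>s. \<phi> (s + int N) = \<phi> s"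
  shows "reg_beta_sum \<phi> lam = (reg_beta_sum \<phi> mu :: 'a::ab_group_add)"
proof -
  define D where "D = diag lam - diag mu"
  define g where "g = (\<lambda>c. \<phi> c - \<phi> (c - 1))"
  have sub: "diag mu \<subseteq> diag lam" using assms(2) unfolding rim_hook_removal_def by simp
  obtain m where m: "cell_content ` D = {m..m + int N - 1}" "inj_on cell_content D"
    using rim_hook_contents[OF assms(1-3)] D_def by blast
  have "(\<Sum>p\<in>D. g (cell_content p)) = (\<Sum>c\<in>{m..m + int N - 1}. g c)"
    using sum.reindex[OF m(2), of g] m(1) by simp
  also have "\<dots> = \<phi> (m + int N - 1) - \<phi> (m - 1)" unfolding g_def by (rule sum_interval_telescope)
  also have "\<dots> = 0" using assms(4)[of "m - 1"] by (simp add: algebra_simps)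
  finally have "(\<Sum>p\<in>D. g (cell_content p)) = 0" .
  moreover have "(\<Sum>p\<in>diag lam. g (cell_content p)) = (\<Sum>p\<in>D. g (cell_content p)) + (\<Sum>p\<in>diag mu. g (cell_content p))"
    unfolding D_def using sum.subset_diff[OF sub finite_diag] .
  ultimately show ?thesis unfolding reg_beta_sum_eq_sum_diag g_def by simp
qed

lemma reg_beta_sum_core_chain:
  assumes "(rim_hook_removal N)\<^sup>*\<^sup>* lam eta" "is_partition lam" "0 < N" "\<And>s. \<phi> (s + int N) = \<phi> s"
  shows "reg_beta_sum \<phi> lam = (reg_beta_sum \<phi> eta :: 'a::ab_group_add)"
proof -
  have "is_partition eta \<and> reg_beta_sum \<phi> lam = reg_beta_sum \<phi> eta"
    using assms(1)
  proof (induction rule: rtranclp_induct)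
    case (step mu nu)
    then show ?case
      using reg_beta_sum_rim_hook_removal[where \<phi> = \<phi>, OF _ step.hyps(2) assms(3,4)]
      by (simp add: rim_hook_removal_def)
  qed (use assms(2) in simp)
  then show ?thesis ..
qed

section \<open>The field \<open>\<rat>(\<zeta>\<^sub>N)\<close>\<close>

lemma Qzeta_of_rat: "of_rat q \<in> Qzeta N"
  unfolding Qzeta_def by (rule CollectI, rule exI[of _ "[:q:]"]) (simp add: map_poly_pCons)

lemma zN_in_Qzeta: "zN N \<in> Qzeta N"
  unfolding Qzeta_def by (rule CollectI, rule exI[of _ "[:0, 1:]"]) (simp add: map_poly_pCons)

lemma Qzeta_add: "x \<in> Qzeta N \<Longrightarrow> y \<in> Qzeta N \<Longrightarrow> x + y \<in> Qzeta N"
proof -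
  assume "x \<in> Qzeta N" "y \<in> Qzeta N"
  then obtain p q where "x = poly (map_poly of_rat p) (zN N)" "y = poly (map_poly of_rat q) (zN N)"
    unfolding Qzeta_def by blast
  moreover have "map_poly (of_rat :: rat \<Rightarrow> complex) (p + q) = map_poly of_rat p + map_poly of_rat q"
    by (rule poly_eqI) (simp add: coeff_map_poly of_rat_add)
  ultimately have "x + y = poly (map_poly of_rat (p + q)) (zN N)" by simp
  then show ?thesis unfolding Qzeta_def by blast
qed

lemma Qzeta_mult: "x \<in> Qzeta N \<Longrightarrow> y \<in> Qzeta N \<Longrightarrow> x * y \<in> Qzeta N"
proof -
  assume "x \<in> Qzeta N" "y \<in> Qzeta N"
  then obtain p q where "x = poly (map_poly of_rat p) (zN N)" "y = poly (map_poly of_rat q) (zN N)"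
    unfolding Qzeta_def by blast
  moreover have "map_poly (of_rat :: rat \<Rightarrow> complex) (p * q) = map_poly of_rat p * map_poly of_rat q"
    by (rule poly_eqI) (simp add: coeff_map_poly coeff_mult of_rat_sum of_rat_mult)
  ultimately have "x * y = poly (map_poly of_rat (p * q)) (zN N)" by simp
  then show ?thesis unfolding Qzeta_def by blast
qed

lemma Qzeta_0: "0 \<in> Qzeta N"
  using Qzeta_of_rat[of 0] by simp

lemma Qzeta_uminus: "x \<in> Qzeta N \<Longrightarrow> - x \<in> Qzeta N"
  using Qzeta_mult[OF Qzeta_of_rat[of "-1"]] by simp

lemma Qzeta_diff: "x \<in> Qzeta N \<Longrightarrow> y \<in> Qzeta N \<Longrightarrow> x - y \<in> Qzeta N"
  using Qzeta_add[OF _ Qzeta_uminus] by simp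

lemma Qzeta_sum: "(\<And>i. i \<in> I \<Longrightarrow> f i \<in> Qzeta N) \<Longrightarrow> sum f I \<in> Qzeta N"
  by (induction I rule: infinite_finite_induct) (auto intro: Qzeta_0 Qzeta_add)

lemma Qzeta_power: "x \<in> Qzeta N \<Longrightarrow> x ^ n \<in> Qzeta N"
  using Qzeta_mult Qzeta_of_rat[of 1] by (induction n) auto

lemma Qzeta_of_real:
  assumes "x \<in> \<rat>"
  shows "complex_of_real x \<in> Qzeta N"
proof -
  obtain q where "x = of_rat q" using assms by (auto elim: Rats_cases)
  moreover have "complex_of_real (of_rat q) = of_rat q" by (cases q) (simp add: of_rat_rat)
  ultimately show ?thesis using Qzeta_of_rat by simp
qed

lemma Qzeta_of_nat: "of_nat n \<in> Qzeta N"
  using Qzeta_of_rat[of "of_nat n"] by simp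

lemma zN_nonzero: "zN N \<noteq> 0"
  by (simp add: zN_def)

lemma zN_powi_eq_1_iff:
  assumes "0 < N"
  shows "zN N powi k = 1 \<longleftrightarrow> int N dvd k"
proof -
  have cis: "zN N powi k = cis (2 * pi * of_int k / real N)"
    unfolding zN_def by (simp add: cis_power_int algebra_simps)
  show ?thesis
  proof
    assume "zN N powi k = 1"
    then have "cos (2 * pi * of_int k / real N) = 1" unfolding cis by (metis cis.sel(1) one_complex.sel(1))
    then obtain n :: int where "2 * pi * of_int k / real N = of_int n * 2 * pi" by (auto simp: cos_one_2pi_int)
    then have "real_of_int k = real_of_int (n * int N)" using assms by (simp add: field_simps)
    then show "int N dvd k" by (simp del: of_int_mult)
  next
    assume "int N dvd k"
    then obtain n where "k = int N * n" by blast
    then have "2 * pi * of_int k / real N = 2 * pi * of_int n" using assms by simp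
    then show "zN N powi k = 1" unfolding cis by (simp add: cis_multiple_2pi)
  qed
qed

lemma zN_powi_add_mult_N:
  assumes "0 < N"
  shows "zN N powi (k + int N * m) = zN N powi k"
proof -
  have "zN N powi (k + int N * m) = zN N powi k * (zN N powi int N) powi m"
    by (simp only: power_int_add[OF disjI1[OF zN_nonzero]] power_int_mult)
  moreover have "zN N powi int N = 1" using zN_powi_eq_1_iff[OF assms, of "int N"] by simp
  ultimately show ?thesis by simp
qed

lemma zN_powi_in_Qzeta:
  assumes "0 < N"
  shows "zN N powi k \<in> Qzeta N"
proof -
  have "zN N powi k = zN N powi (k mod int N + int N * (k div int N))" by simp
  also have "\<dots> = zN N powi (k mod int N)" by (rule zN_powi_add_mult_N[OF assms])
  also have "\<dots> = zN N ^ nat (k mod int N)"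
    using assms by (metis power_int_of_nat of_nat_0_less_iff int_nat_eq pos_mod_sign)
  finally show ?thesis using Qzeta_power[OF zN_in_Qzeta] by simp
qed

lemma fps_inverse_nth_closed:
  fixes f :: "'a::field fps"
  assumes add: "\<And>x y. P x \<Longrightarrow> P y \<Longrightarrow> P (x + y)" and zero: "P 0"
    and mult: "\<And>x y. P x \<Longrightarrow> P y \<Longrightarrow> P (x * y)" and uminus: "\<And>x. P x \<Longrightarrow> P (- x)"
    and coeffs: "\<And>n. P (f $ n)" and inverse_0: "P (inverse (f $ 0))"
  shows "P (inverse f $ n)"
proof -
  have sum: "P (sum g A)" if "\<And>i. i \<in> A \<Longrightarrow> P (g i)" for g and A :: "nat set"
    using that by (induction A rule: infinite_finite_induct) (auto intro: add zero)
  have "P (natfun_inverse f n)"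
  proof (induction n rule: less_induct)
    case (less n)
    show ?case
    proof (cases n)
      case (Suc m)
      have "P (\<Sum>i = 1..n. f $ i * natfun_inverse f (n - i))"
        by (rule sum) (auto intro!: mult coeffs less.IH)
      then show ?thesis using Suc mult uminus inverse_0 by simp
    qed (simp add: inverse_0)
  qed
  then show ?thesis by (simp add: fps_inverse_def)
qed

lemma bernoulli_num_Rats: "bernoulli_num n \<in> \<rat>"
proof -
  have "inverse (fps_shift 1 (fps_exp (1::real) - 1)) $ n \<in> \<rat>"
    by (rule fps_inverse_nth_closed[where P = "\<lambda>x. x \<in> \<rat>"])
      (auto simp: Rats_add Rats_mult Rats_minus_iff Rats_divide simp del: of_nat_fact
        intro: Rats_of_nat[of "fact _", unfolded of_nat_fact])
  then show ?thesis
    unfolding bernoulli_num_def using Rats_of_nat[of "fact n", unfolded of_nat_fact] Rats_mult by blast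
qed

lemma zeta_neg_Rats: "zeta_neg k \<in> \<rat>"
  unfolding zeta_neg_def using bernoulli_num_Rats by simp

lemma inverse_one_minus_root_of_unity:
  fixes w :: complex
  assumes "w ^ N = 1" "w \<noteq> 1" "0 < N"
  shows "inverse (1 - w) = - (\<Sum>m<N. of_nat m * w ^ m) / of_nat N"
proof -
  have "(w - 1) * (\<Sum>m<N. w ^ m) = w ^ N - 1"
    by (induction N) (simp_all add: algebra_simps)
  then have "(\<Sum>m<N. w ^ (m + 1)) = 0" using assms(1,2) by (simp add: sum_distrib_left[symmetric] mult.commute)
  moreover have "(w - 1) * (\<Sum>m<N. of_nat m * w ^ m) = of_nat N * w ^ N - (\<Sum>m<N. w ^ (m + 1))"
    by (induction N) (simp_all add: algebra_simps)
  ultimately have "(w - 1) * (\<Sum>m<N. of_nat m * w ^ m) = of_nat N" using assms(1) by simp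
  then show ?thesis using assms by (simp add: field_simps)
qed

text \<open>For \<open>r \<noteq> 0\<close> the constant \<open>1 - \<zeta>\<^sub>N^(-r)\<close> of the series defining \<open>c_k^r\<close> is invertible in
  \<open>\<rat>(\<zeta>)\<close>, so all its Taylor coefficients lie in \<open>\<rat>(\<zeta>)\<close>.\<close>

lemma ckr_in_Qzeta:
  assumes "0 < N" "r < N"
  shows "ckr N r k \<in> Qzeta N"
proof (cases "r = 0")
  case True
  have "(1 - 1 / 2 ^ k) * zeta_neg k \<in> \<rat>" using zeta_neg_Rats by simp
  then show ?thesis unfolding ckr_def if_P[OF True] by (rule Qzeta_of_real)
next
  case False
  define w where "w = zN N powi (- int r)"
  have w: "w \<in> Qzeta N" unfolding w_def by (rule zN_powi_in_Qzeta[OF assms(1)])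
  have "w ^ N = w powi int N" by simp
  also have "\<dots> = zN N powi (- int r * int N)" unfolding w_def by (simp only: power_int_mult)
  finally have "w ^ N = 1" using zN_powi_eq_1_iff[OF assms(1)] by simp
  moreover have "w \<noteq> 1"
    using zN_powi_eq_1_iff[OF assms(1)] False assms(2) unfolding w_def by (auto dest: zdvd_imp_le)
  ultimately have "inverse (1 - w) = of_rat (- 1 / of_nat N) * (\<Sum>m<N. of_nat m * w ^ m)"
    using inverse_one_minus_root_of_unity assms(1) by (simp add: of_rat_divide of_rat_minus)
  then have inv: "inverse (1 - w) \<in> Qzeta N"
    by (auto intro!: Qzeta_mult Qzeta_of_rat Qzeta_sum Qzeta_of_nat Qzeta_power w)
  define f where "f = fps_exp (1/2) - fps_const w * fps_exp (-1/2 :: complex)"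
  have "inverse f $ k \<in> Qzeta N"
  proof (rule fps_inverse_nth_closed[where P = "\<lambda>x. x \<in> Qzeta N"])
    fix n
    have "(of_rat (fact n) :: complex) = fact n" by (metis of_nat_fact of_rat_of_nat_eq)
    then have "f $ n = of_rat ((1/2) ^ n / fact n) - w * of_rat ((-1/2) ^ n / fact n)"
      unfolding f_def by (simp add: of_rat_divide of_rat_power of_rat_minus)
    then show "f $ n \<in> Qzeta N" by (simp add: Qzeta_diff Qzeta_mult Qzeta_of_rat w)
  qed (use inv in \<open>auto simp: f_def intro: Qzeta_add Qzeta_mult Qzeta_uminus Qzeta_0\<close>)
  then have "fact k * inverse f $ k \<in> Qzeta N" using Qzeta_mult Qzeta_of_nat[of "fact k"] by simp
  then show ?thesis using False unfolding ckr_def f_def w_def by simp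
qed

lemma pkr_in_Qzeta:
  assumes "0 < N" "r < N"
  shows "pkr N r k lam \<in> Qzeta N"
  unfolding pkr_def
  by (intro Qzeta_add Qzeta_sum Qzeta_diff Qzeta_mult Qzeta_power Qzeta_of_real
      ckr_in_Qzeta[OF assms] zN_powi_in_Qzeta[OF assms(1)]) simp_all

lemma LambdaN_in_Qzeta:
  assumes "G \<in> LambdaN N" "0 < N"
  shows "G lam \<in> Qzeta N"
  using assms(1) by induction (auto intro: Qzeta_add Qzeta_mult pkr_in_Qzeta assms(2))

lemma LambdaN_sum:
  "finite I \<Longrightarrow> (\<And>i. i \<in> I \<Longrightarrow> f i \<in> LambdaN N) \<Longrightarrow> (\<lambda>x. \<Sum>i\<in>I. f i x) \<in> LambdaN N"
proof (induction I rule: finite_induct)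
  case empty
  then show ?case using LambdaN.const[OF Qzeta_0] by simp
next
  case (insert y F)
  then show ?case using LambdaN.add[of "f y" N "\<lambda>x. \<Sum>i\<in>F. f i x"] by simp
qed

lemma LambdaN_scale: "c \<in> Qzeta N \<Longrightarrow> f \<in> LambdaN N \<Longrightarrow> (\<lambda>x. c * f x) \<in> LambdaN N"
  using LambdaN.mult[OF LambdaN.const] by blast

section \<open>Expansion in twisted powers\<close>

definition shifted_power :: "nat \<Rightarrow> int \<Rightarrow> complex" where
  "shifted_power k u = (of_int u + 1/2) ^ k"

definition twisted_power :: "nat \<Rightarrow> nat \<Rightarrow> nat \<Rightarrow> int \<Rightarrow> complex" where
  "twisted_power N r m s = zN N powi (int r * (s + 1)) * (of_int s + 1/2) ^ m"

lemma pk_eq_reg_beta_sum: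
  "complex_of_real (pk k \<rho>) = complex_of_real ((1 - 1 / 2 ^ k) * zeta_neg k) + reg_beta_sum (shifted_power k) \<rho>"
  unfolding pk_def reg_beta_sum_def shifted_power_def by simp

lemma pkr_eq_reg_beta_sum:
  "pkr N r m lam = ckr N r m + reg_beta_sum (twisted_power N r m) lam"
  unfolding pkr_def reg_beta_sum_def twisted_power_def by (simp add: algebra_simps)

lemma twisted_power_0_periodic:
  assumes "0 < N"
  shows "twisted_power N r 0 (s + int N) = twisted_power N r 0 s"
proof -
  have "int r * (s + int N + 1) = int r * (s + 1) + int N * int r" by (simp add: algebra_simps)
  then show ?thesis unfolding twisted_power_def using zN_powi_add_mult_N[OF assms] by simp
qed

lemma sum_powers_root_of_unity:
  assumes "N = t * q" "0 < N"
  shows "(\<Sum>j<t. (zN N powi (int q * d)) ^ j) = (if int t dvd d then of_nat t else 0)"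
proof -
  define w where "w = zN N powi (int q * d)"
  have dvd_iff: "int N dvd int q * d \<longleftrightarrow> int t dvd d"
    using assms by (simp add: mult.commute)
  have "w ^ t = zN N powi (int q * d * int t)" unfolding w_def by (simp add: power_int_mult)
  then have "w ^ t = 1" using zN_powi_eq_1_iff[OF assms(2)] assms(1) by (simp add: mult.commute)
  moreover have "w = 1 \<longleftrightarrow> int t dvd d" unfolding w_def using zN_powi_eq_1_iff[OF assms(2)] dvd_iff by simp
  ultimately show ?thesis
    unfolding w_def[symmetric] by (cases "int t dvd d") (simp_all add: geometric_sum)
qed

lemma zN_powi_twist:
  "zN N powi (- int (j * q) * (int a + 1)) * zN N powi (int (j * q) * (s + 1))
     = (zN N powi (int q * (s - int a))) ^ j"
proof -
  have "- int (j * q) * (int a + 1) + int (j * q) * (s + 1) = int q * (s - int a) * int j"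
    by (simp add: algebra_simps)
  then show ?thesis
    by (metis power_int_add[OF disjI1[OF zN_nonzero]] power_int_mult power_int_of_nat)
qed

lemma mod_eq_iff_dvd_diff:
  assumes "a < t"
  shows "s mod int t = int a \<longleftrightarrow> int t dvd s - int a"
proof -
  have "int a mod int t = int a" using assms by (metis mod_less of_nat_mod)
  then show ?thesis using mod_eq_dvd_iff[of s "int t" "int a"] by simp
qed

lemma quotient_lift_shifted_power_eq:
  assumes "0 < t" "a < t"
  shows "quotient_lift t a c (shifted_power k) s = (if int t dvd s - int a
    then ((of_int s + 1/2) / of_nat t + (1/2 - (of_nat a + 1/2) / of_nat t - of_int c)) ^ k else 0)"
proof (cases "s mod int t = int a")
  case True
  define Q where "Q = (s - int a) div int t"
  have s: "s = int t * Q + int a"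
    unfolding Q_def using eq_mult_div_add_if_mod_eq assms(1) True by simp
  then have affine: "(of_int s + 1/2) / of_nat t + (1/2 - (of_nat a + 1/2) / of_nat t - of_int c)
      = (of_int (Q - c) + 1/2 :: complex)"
    using assms(1) by (simp add: field_simps)
  have dvd: "int t dvd s - int a" using s by simp
  show ?thesis
    unfolding quotient_lift_def shifted_power_def if_P[OF True] if_P[OF dvd] affine Q_def ..
next
  case False
  then show ?thesis using mod_eq_iff_dvd_diff[OF assms(2)] by (simp add: quotient_lift_def)
qed

text \<open>Since \<open>\<omega> = \<zeta>\<^sub>N^(q(s - a))\<close> is a \<open>t\<close>-th root of unity, \<open>\<Sum>j<t. \<omega>^j\<close> filters the class
  \<open>s \<equiv> a (mod t)\<close>; the binomial expansion of the \<open>k\<close>-th power of the affine function above gives the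
  coefficients.\<close>

lemma quotient_lift_shifted_power_expansion:
  assumes "N = t * q" "0 < t" "0 < q" "a < t"
  shows "\<exists>e. (\<forall>j m. e j m \<in> Qzeta N) \<and>
    (\<forall>s. quotient_lift t a c (shifted_power k) s = (\<Sum>j<t. \<Sum>m\<le>k. e j m * twisted_power N (j * q) m s))"
proof -
  have N: "0 < N" using assms by simp
  define \<delta> :: complex where "\<delta> = 1/2 - (of_nat a + 1/2) / of_nat t - of_int c"
  define \<tau> :: complex where "\<tau> = 1 / of_nat t"
  define e where "e = (\<lambda>j m. \<tau> * of_nat (k choose m) * \<tau> ^ m * \<delta> ^ (k - m) * zN N powi (- int (j * q) * (int a + 1)))"
  have "\<delta> = of_rat (1/2 - (of_nat a + 1/2) / of_nat t - of_int c)"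
    unfolding \<delta>_def by (simp add: of_rat_add of_rat_diff of_rat_divide)
  moreover have "\<tau> = of_rat (1 / of_nat t)" unfolding \<tau>_def by (simp add: of_rat_divide)
  ultimately have "e j m \<in> Qzeta N" for j m
    unfolding e_def by (intro Qzeta_mult Qzeta_power Qzeta_of_nat zN_powi_in_Qzeta[OF N]) (simp_all add: Qzeta_of_rat)
  moreover have "quotient_lift t a c (shifted_power k) s = (\<Sum>j<t. \<Sum>m\<le>k. e j m * twisted_power N (j * q) m s)" for s
  proof -
    define x :: complex where "x = of_int s + 1/2"
    define w where "w = zN N powi (int q * (s - int a))"
    have "(\<Sum>j<t. \<Sum>m\<le>k. e j m * twisted_power N (j * q) m s)
        = (\<Sum>j<t. \<Sum>m\<le>k. w ^ j * (\<tau> * (of_nat (k choose m) * (\<tau> * x) ^ m * \<delta> ^ (k - m))))"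
      unfolding e_def twisted_power_def x_def[symmetric] w_def zN_powi_twist[symmetric]
      by (intro sum.cong refl) (simp add: power_mult_distrib algebra_simps)
    also have "\<dots> = (\<Sum>j<t. w ^ j) * (\<Sum>m\<le>k. \<tau> * (of_nat (k choose m) * (\<tau> * x) ^ m * \<delta> ^ (k - m)))"
      by (rule sum_product[symmetric])
    also have "\<dots> = (\<Sum>j<t. w ^ j) * (\<tau> * (\<tau> * x + \<delta>) ^ k)"
      by (simp add: sum_distrib_left binomial_ring)
    also have "\<dots> = (if int t dvd s - int a then (x / of_nat t + \<delta>) ^ k else 0)"
      unfolding w_def sum_powers_root_of_unity[OF assms(1) N] using assms(2) by (simp add: \<tau>_def)
    also have "\<dots> = quotient_lift t a c (shifted_power k) s"
      unfolding quotient_lift_shifted_power_eq[OF assms(2,4)] x_def \<delta>_def ..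
    finally show ?thesis ..
  qed
  ultimately show ?thesis by blast
qed

section \<open>Invariance along rim hook removals\<close>

lemma exists_window:
  assumes "0 < t" "a < t"
  shows "\<exists>X. B \<le> c1 - X \<and> B \<le> c2 - X \<and> B \<le> - (int t * X + int a)"
proof -
  define S where "S = \<bar>B\<bar> + \<bar>c1\<bar> + \<bar>c2\<bar> + 1"
  have "S - 1 \<le> int t * (S - 1)"
    using assms(1) mult_right_mono[of 1 "int t" "S - 1"] unfolding S_def by simp
  then have "S \<le> - (int t * (- S) + int a)" using assms(2) by (simp add: algebra_simps)
  moreover have "B \<le> c1 + S" "B \<le> c2 + S" "B \<le> S" unfolding S_def by arith+
  ultimately show ?thesis by (intro exI[of _ "- S"]) auto
qed

lemma quotient_lift_const_periodic:
  assumes "t dvd N"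
  shows "quotient_lift t a c (\<lambda>_. x) (s + int N) = quotient_lift t a c (\<lambda>_. x) s"
proof -
  obtain q where "N = t * q" using assms by blast
  then have "(s + int N) mod int t = s mod int t" by simp
  then show ?thesis by (simp add: quotient_lift_def)
qed

lemma beta_sum_const: "beta_sum (\<lambda>_. x) lam n = of_nat n * x"
  by (simp add: beta_sum_def)

text \<open>The shift \<open>c\<close> relating the quotient beta set to a beta set is the charge of the
  \<open>a\<close>-th runner; it is read off from a residue-class count, which is \<open>N\<close>-periodic.\<close>

lemma quotient_shift_core_chain:
  assumes "0 < N" "t dvd N" "0 < t" "a < t"
    and "(rim_hook_removal N)\<^sup>*\<^sup>* lam eta" "is_partition lam" "is_partition eta"
    and "is_partition \<rho>" "quot_set t a lam = (\<lambda>x. x + c') ` beta_set \<rho>"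
    and "is_partition \<rho>\<^sub>\<eta>" "quot_set t a eta = (\<lambda>x. x + c) ` beta_set \<rho>\<^sub>\<eta>"
  shows "c' = c"
proof -
  define B where "B = int (length \<rho> + length \<rho>\<^sub>\<eta> + length lam + length eta)"
  obtain X where X: "B \<le> c' - X" "B \<le> c - X" "B \<le> - (int t * X + int a)"
    using exists_window[OF assms(3,4)] by blast
  have len: "int (length \<rho>) \<le> c' - X" "int (length \<rho>\<^sub>\<eta>) \<le> c - X"
    "int (length lam) \<le> - (int t * X + int a)" "int (length eta) \<le> - (int t * X + int a)"
    using X unfolding B_def by linarith+
  define M where "M = nat (- (int t * X + int a))"
  define ind :: "int \<Rightarrow> int" where "ind = quotient_lift t a c (\<lambda>_. 1)"
  have ind: "quotient_lift t a c' (\<lambda>_. 1) = ind" unfolding ind_def quotient_lift_def by simp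
  have lam: "int (nat (c' - X)) = beta_sum ind lam M"
    using beta_sum_shifted_quotient[OF assms(3,6,8,9) len(1,3), of "\<lambda>_. 1 :: int"]
    unfolding beta_sum_const ind M_def by simp
  have eta: "int (nat (c - X)) = beta_sum ind eta M"
    using beta_sum_shifted_quotient[OF assms(3,7,10,11) len(2,4), of "\<lambda>_. 1 :: int"]
    unfolding beta_sum_const ind_def M_def by simp
  have "reg_beta_sum ind lam = reg_beta_sum ind eta"
    using reg_beta_sum_core_chain[OF assms(5,6,1)] quotient_lift_const_periodic[OF assms(2)]
    unfolding ind_def by blast
  moreover have "length lam \<le> M" "length eta \<le> M" using len(3,4) unfolding M_def by linarith+
  ultimately have "beta_sum ind lam M = beta_sum ind eta M"
    by (simp add: reg_beta_sum_eq_beta_sum_diff)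
  then have "int (nat (c' - X)) = int (nat (c - X))" using lam eta by simp
  then show ?thesis using len(1,2) by simp
qed

lemma reg_beta_sum_shifted_quotient_diff:
  assumes "0 < t" "a < t" "is_partition lam" "is_partition eta"
    and "is_partition \<rho>" "quot_set t a lam = (\<lambda>x. x + c) ` beta_set \<rho>"
    and "is_partition \<rho>\<^sub>\<eta>" "quot_set t a eta = (\<lambda>x. x + c) ` beta_set \<rho>\<^sub>\<eta>"
  shows "reg_beta_sum F \<rho> - reg_beta_sum F \<rho>\<^sub>\<eta> =
    reg_beta_sum (quotient_lift t a c F) lam - reg_beta_sum (quotient_lift t a c F) eta"
proof -
  define B where "B = int (length \<rho> + length \<rho>\<^sub>\<eta> + length lam + length eta)"
  obtain X where X: "B \<le> c - X" "B \<le> - (int t * X + int a)"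
    using exists_window[OF assms(1,2)] by blast
  have len: "int (length \<rho>) \<le> c - X" "int (length \<rho>\<^sub>\<eta>) \<le> c - X"
    "int (length lam) \<le> - (int t * X + int a)" "int (length eta) \<le> - (int t * X + int a)"
    using X unfolding B_def by linarith+
  define n where "n = nat (c - X)"
  define M where "M = nat (- (int t * X + int a))"
  have "beta_sum F \<rho> n = beta_sum (quotient_lift t a c F) lam M"
    using beta_sum_shifted_quotient[OF assms(1,3,5,6) len(1,3)] unfolding n_def M_def .
  moreover have "beta_sum F \<rho>\<^sub>\<eta> n = beta_sum (quotient_lift t a c F) eta M"
    using beta_sum_shifted_quotient[OF assms(1,4,7,8) len(2,4)] unfolding n_def M_def .
  moreover have "reg_beta_sum F \<rho> = beta_sum F \<rho> n - beta_sum F [] n"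
    "reg_beta_sum F \<rho>\<^sub>\<eta> = beta_sum F \<rho>\<^sub>\<eta> n - beta_sum F [] n"
    "reg_beta_sum (quotient_lift t a c F) lam =
       beta_sum (quotient_lift t a c F) lam M - beta_sum (quotient_lift t a c F) [] M"
    "reg_beta_sum (quotient_lift t a c F) eta =
       beta_sum (quotient_lift t a c F) eta M - beta_sum (quotient_lift t a c F) [] M"
    using len unfolding n_def M_def by (simp_all add: reg_beta_sum_eq_beta_sum_diff le_nat_iff)
  ultimately show ?thesis by simp
qed

lemma pk_Rats: "pk k \<rho> \<in> \<rat>"
  unfolding pk_def using zeta_neg_Rats by (intro Rats_add Rats_mult Rats_sum) auto

text \<open>Only the terms with \<open>m \<ge> 1\<close> of the expansion are generators of \<open>\<Lambda>\<^sub>N\<^sup>*\<close>; the \<open>m = 0\<close> terms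
  are \<open>N\<close>-periodic and hence constant along rim hook removals.\<close>

lemma reg_beta_sum_quotient_lift_LambdaN:
  assumes "N = t * q" "0 < t" "0 < q" "a < t"
  shows "\<exists>G\<in>LambdaN N. \<forall>lam eta. is_partition lam \<and> (rim_hook_removal N)\<^sup>*\<^sup>* lam eta \<longrightarrow>
    reg_beta_sum (quotient_lift t a c (shifted_power k)) lam
      - reg_beta_sum (quotient_lift t a c (shifted_power k)) eta = G lam - G eta"
proof -
  have N: "0 < N" and r: "\<And>j. j < t \<Longrightarrow> j * q < N" using assms by auto
  obtain e where e: "\<And>j m. e j m \<in> Qzeta N"
    and expansion: "\<And>s. quotient_lift t a c (shifted_power k) s =
      (\<Sum>j<t. \<Sum>m\<le>k. e j m * twisted_power N (j * q) m s)"
    using quotient_lift_shifted_power_expansion[OF assms] by blast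
  define R where "R j m = reg_beta_sum (twisted_power N (j * q) m)" for j m
  have L: "reg_beta_sum (quotient_lift t a c (shifted_power k)) l = (\<Sum>j<t. \<Sum>m\<le>k. e j m * R j m l)" for l
    unfolding expansion R_def by (simp add: reg_beta_sum_sum reg_beta_sum_mult)
  define G where "G l = (\<Sum>j<t. \<Sum>m\<in>{1..k}. e j m * pkr N (j * q) m l)" for l
  have "G \<in> LambdaN N"
    unfolding G_def by (intro LambdaN_sum LambdaN_scale LambdaN.gen e finite_lessThan finite_atLeastAtMost r) auto
  moreover have "reg_beta_sum (quotient_lift t a c (shifted_power k)) lam
      - reg_beta_sum (quotient_lift t a c (shifted_power k)) eta = G lam - G eta"
    if "is_partition lam" "(rim_hook_removal N)\<^sup>*\<^sup>* lam eta" for lam eta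
  proof -
    have "R j 0 lam = R j 0 eta" for j
      unfolding R_def using reg_beta_sum_core_chain[OF that(2,1) N] twisted_power_0_periodic[OF N] by blast
    then have "(\<Sum>m\<le>k. e j m * (R j m lam - R j m eta)) = (\<Sum>m\<in>{1..k}. e j m * (R j m lam - R j m eta))"
      for j by (simp add: atMost_atLeast0 atLeast0_atMost_Suc_eq_insert_0 sum.atLeast_Suc_atMost)
    also have "\<dots> j = (\<Sum>m\<in>{1..k}. e j m * (pkr N (j * q) m lam - pkr N (j * q) m eta))" for j
      unfolding R_def pkr_eq_reg_beta_sum by simp
    finally have "(\<Sum>m\<le>k. e j m * (R j m lam - R j m eta))
        = (\<Sum>m\<in>{1..k}. e j m * (pkr N (j * q) m lam - pkr N (j * q) m eta))" for j .
    then show ?thesis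
      unfolding L G_def by (simp add: sum_subtractf[symmetric] right_diff_distrib)
  qed
  ultimately show ?thesis by blast
qed

lemma pk_t_quotient_core_chain:
  assumes "0 < N" "t dvd N" "0 < t" "a < t"
    and "(rim_hook_removal N)\<^sup>*\<^sup>* lam eta" "is_partition lam" "is_partition eta"
    and "is_partition \<rho>\<^sub>\<eta>" "quot_set t a eta = (\<lambda>x. x + c) ` beta_set \<rho>\<^sub>\<eta>"
  shows "complex_of_real (pk k (t_quotient t a lam)) - complex_of_real (pk k \<rho>\<^sub>\<eta>) =
    reg_beta_sum (quotient_lift t a c (shifted_power k)) lam
      - reg_beta_sum (quotient_lift t a c (shifted_power k)) eta"
proof -
  obtain \<rho> c' where \<rho>: "is_partition \<rho>" "quot_set t a lam = (\<lambda>x. x + c') ` beta_set \<rho>"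
    using quot_set_is_shifted_beta_set[OF assms(3,4,6)] by blast
  have "c' = c" using quotient_shift_core_chain[OF assms(1-7) \<rho> assms(8,9)] .
  then have "reg_beta_sum (shifted_power k) \<rho> - reg_beta_sum (shifted_power k) \<rho>\<^sub>\<eta> =
      reg_beta_sum (quotient_lift t a c (shifted_power k)) lam
      - reg_beta_sum (quotient_lift t a c (shifted_power k)) eta"
    using reg_beta_sum_shifted_quotient_diff[OF assms(3,4,6,7) \<rho>(1) _ assms(8,9)] \<rho>(2) by simp
  then show ?thesis
    unfolding t_quotient_eqI[OF \<rho>] by (simp only: pk_eq_reg_beta_sum add_diff_cancel_left)
qed

theorem mainTheorem10:
  fixes N t a k :: nat and eta :: "nat list"
  assumes "N \<ge> 2"
    and "is_partition eta" and "is_core N eta"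
    and "t dvd N" and "a < t" and "k \<ge> 1"
  shows "\<exists>G \<in> LambdaN N. \<forall>lam. is_partition lam \<and> core_of N lam eta \<longrightarrow>
           G lam = complex_of_real (pk k (t_quotient t a lam))"
proof -
  have N: "0 < N" using assms(1) by simp
  obtain q where q: "N = t * q" using assms(4) by blast
  then have t: "0 < t" and "0 < q" using N by auto
  obtain \<rho>\<^sub>\<eta> c where \<rho>\<^sub>\<eta>: "is_partition \<rho>\<^sub>\<eta>" "quot_set t a eta = (\<lambda>x. x + c) ` beta_set \<rho>\<^sub>\<eta>"
    using quot_set_is_shifted_beta_set[OF t assms(5,2)] by blast
  obtain G where G: "G \<in> LambdaN N" and G_diff: "\<forall>lam eta. is_partition lam \<and> (rim_hook_removal N)\<^sup>*\<^sup>* lam eta \<longrightarrow>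
      reg_beta_sum (quotient_lift t a c (shifted_power k)) lam
      - reg_beta_sum (quotient_lift t a c (shifted_power k)) eta = G lam - G eta"
    using reg_beta_sum_quotient_lift_LambdaN[OF q t \<open>0 < q\<close> assms(5)] ..
  define C where "C = complex_of_real (pk k \<rho>\<^sub>\<eta>) - G eta"
  have "C \<in> Qzeta N" unfolding C_def by (rule Qzeta_diff[OF Qzeta_of_real[OF pk_Rats] LambdaN_in_Qzeta[OF G N]])
  then have "(\<lambda>l. G l + C) \<in> LambdaN N" by (rule LambdaN.add[OF G LambdaN.const])
  moreover have "G lam + C = complex_of_real (pk k (t_quotient t a lam))"
    if "is_partition lam" "core_of N lam eta" for lam
    using pk_t_quotient_core_chain[OF N assms(4) t assms(5) _ that(1) assms(2) \<rho>\<^sub>\<eta>, of k] G_diff that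
    unfolding C_def core_of_def by (simp add: algebra_simps)
  ultimately show ?thesis by (intro bexI[of _ "\<lambda>l. G l + C"]) auto
qed

end
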